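(* (i) Let $\mathbf D:\mathbb{R}^{d\times N}\to\mathbb{R}^{d\times N}$ be $C^1$ with $\mathbf D(\mathbf T)\cdot\mathbf T\ge C_1|\mathbf T|-C_0$, $|\mathbf D(\mathbf T)|\le C_2$ and $h(|\mathbf T|)|\mathbf B|^2\le\sum\mathcal A_{i\nu j\mu}(\mathbf T)\mathbf B_{i\nu}\mathbf B_{j\mu}\le C_2|\mathbf B|^2/(1+|\mathbf T|)$ for all $\mathbf T,\mathbf B$, where $\mathcal A_{i\nu j\mu}=\partial\mathbf D_{i\nu}/\partial\mathbf T_{j\mu}$, $C_0\ge0$, $C_1,C_2>0$, and $h$ is positive, nonincreasing and continuous. Let $\Omega\subset\mathbb{R}^d$ be a bounded domain and $\mathbf u_0\in W^{1,\infty}(\Omega)^N$. Then the following are equivalent: (a) there is a compact set $K$ contained in the interior of $\mathbf D(\mathbb{R}^{d\times N})$ with $\nabla\mathbf u_0(x)\in K$ for a.e. $x\in\Omega$; (b) there is $c>0$ with $$c\le\liminf_{n\to\infty}\Big(\operatorname*{ess\,inf}_{x\in\Omega}\ \inf_{\mathbf T\in\mathbb{R}^{d\times N},|\mathbf T|=1}(\mathbf D(n\mathbf T)-\nabla\mathbf u_0(x))\cdot\mathbf T\Big).$$ (ii) Analogously, let $\boldsymbol\varepsilon^*:\mathbb{R}^{d\times d}_{sym}\to\mathbb{R}^{d\times d}_{sym}$ be $C^1$ with $\boldsymbol\varepsilon^*(\mathbf T)\cdot\mathbf T\ge C_1|\mathbf T|-C_0$, $|\boldsymbol\varepsilon^*(\mathbf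 T)|\le C_2$ and $h(|\mathbf T|)|\mathbf B|^2\le\sum\mathcal A_{ijkl}(\mathbf T)\mathbf B_{ij}\mathbf B_{kl}\le C_2|\mathbf B|^2/(1+|\mathbf T|)$ for all symmetric $\mathbf T,\mathbf B$, where $\mathcal A_{ijkl}=\partial\boldsymbol\varepsilon^*_{ij}/\partial\mathbf T_{kl}$. For $\mathbf u_0\in W^{1,1}(\Omega)^d$ the following are equivalent: (a') $\boldsymbol\varepsilon(\mathbf u_0)(x)$ lies for a.e. $x$ in a compact set $K$ contained in the interior of $\boldsymbol\varepsilon^*(\mathbb{R}^{d\times d}_{sym})$; (b') there is $c>0$ with $c\le\liminf_{n\to\infty}\big(\operatorname*{ess\,inf}_{x\in\Omega}\inf_{\mathbf T\in\mathbb{R}^{d\times d}_{sym},|\mathbf T|=1}(\boldsymbol\varepsilon^*(n\mathbf T)-\boldsymbol\varepsilon(\mathbf u_0)(x))\cdot\mathbf T\big)$.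
   Context: $\mathbf A\cdot\mathbf B$ is the Frobenius inner product and $|\cdot|$ the Euclidean norm of matrices; $\boldsymbol\varepsilon(\mathbf u)=\frac12(\nabla\mathbf u+(\nabla\mathbf u)^T)$; $\mathbb{R}^{d\times d}_{sym}$ is the space of symmetric matrices. *)

theory Defs
  imports "HOL-Analysis.Analysis"
begin

fun Ck :: "nat \<Rightarrow> ('a::euclidean_space \<Rightarrow> real) \<Rightarrow> bool" where
  "Ck 0 f = continuous_on UNIV f"
| "Ck (Suc k) f = (f differentiable_on UNIV \<and>
      (\<forall>i\<in>Basis. Ck k (\<lambda>x. frechet_derivative f (at x) i)))"

definition smooth_fun :: "('a::euclidean_space \<Rightarrow> real) \<Rightarrow> bool" where
  "smooth_fun f \<longleftrightarrow> (\<forall>k. Ck k f)"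

definition test_fun :: "('a::euclidean_space) set \<Rightarrow> ('a \<Rightarrow> real) \<Rightarrow> bool" where
  "test_fun \<Omega> \<phi> \<longleftrightarrow> smooth_fun \<phi> \<and> compact (closure {x. \<phi> x \<noteq> 0})
      \<and> closure {x. \<phi> x \<noteq> 0} \<subseteq> \<Omega>"

text \<open>Weak gradient: (grad u)_{i nu} = d_i u_nu, stored as G x $ i $ nu.\<close>
definition weak_gradient ::
  "(real^'d) set \<Rightarrow> (real^'d \<Rightarrow> real^'n) \<Rightarrow> (real^'d \<Rightarrow> real^'n^'d) \<Rightarrow> bool" where
  "weak_gradient \<Omega> u G \<longleftrightarrow>
     (\<forall>K. compact K \<and> K \<subseteq> \<Omega> \<longrightarrow> integrable (lebesgue_on K) u \<and> integrable (lebesgue_on K) G)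
   \<and> (\<forall>\<phi> i \<nu>. test_fun \<Omega> \<phi> \<longrightarrow>
        integral\<^sup>L (lebesgue_on \<Omega>) (\<lambda>x. u x $ \<nu> * frechet_derivative \<phi> (at x) (axis i 1))
        = - integral\<^sup>L (lebesgue_on \<Omega>) (\<lambda>x. G x $ i $ \<nu> * \<phi> x))"

definition Linf :: "('a::euclidean_space) set \<Rightarrow> ('a \<Rightarrow> 'b::euclidean_space) \<Rightarrow> bool" where
  "Linf \<Omega> f \<longleftrightarrow> f \<in> borel_measurable (lebesgue_on \<Omega>) \<and>
     (\<exists>M. AE x in lebesgue_on \<Omega>. norm (f x) \<le> M)"

definition W1inf :: "(real^'d) set \<Rightarrow> (real^'d \<Rightarrow> real^'n) \<Rightarrow> bool" where
  "W1inf \<Omega> u \<longleftrightarrow> Linf \<Omega> u \<and> (\<exists>G. weak_gradient \<Omega> u G \<and> Linf \<Omega> G)"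

definition W11 :: "(real^'d) set \<Rightarrow> (real^'d \<Rightarrow> real^'n) \<Rightarrow> bool" where
  "W11 \<Omega> u \<longleftrightarrow> integrable (lebesgue_on \<Omega>) u \<and>
     (\<exists>G. weak_gradient \<Omega> u G \<and> integrable (lebesgue_on \<Omega>) G)"

definition essinf :: "'a measure \<Rightarrow> ('a \<Rightarrow> ereal) \<Rightarrow> ereal" where
  "essinf M f = Sup {z. AE x in M. z \<le> f x}"

definition Sym :: "(real^'d^'d) set" where
  "Sym = {T. transpose T = T}"

definition sym_grad :: "(real^'d \<Rightarrow> real^'d^'d) \<Rightarrow> real^'d \<Rightarrow> real^'d^'d" where
  "sym_grad G x = (1/2) *\<^sub>R (G x + transpose (G x))"

end

theory Submission
  imports Defs
begin

text \<open>Monotonicity (from the positive semidefinite derivative) makes \<open>n \<mapsto> E(nT)\<cdot>T\<close> nondecreasing;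
  call its supremum the asymptotic slope \<open>g(T)\<close>. If \<open>y\<close> lies in the interior of the range,
  testing monotonicity against a preimage of \<open>y + \<rho>T/2\<close> shows \<open>(E(nT) - y)\<cdot>T > 0\<close> for
  large \<open>n\<close>, and a Dini argument makes this uniform over the unit sphere times a compact \<open>K\<close>.
  Conversely, a uniform margin \<open>c\<close> confines the gradient to the compact set
  \<open>{y. T\<cdot>y \<le> g(T) - c for all unit T}\<close>; near each of its points \<open>z\<close> the map is coercive on a
  large sphere, hence \<open>z\<close> is attained by Brouwer's fixed point theorem.\<close>

lemma eventually_uniformly_positive_compact:
  fixes F :: "nat \<Rightarrow> 'a::metric_space \<Rightarrow> real"
  assumes C: "compact C" and cont: "\<And>m. continuous_on C (F m)"
    and mono: "\<And>x m n. x \<in> C \<Longrightarrow> m \<le> n \<Longrightarrow> F m x \<le> F n x"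
    and pos: "\<And>x. x \<in> C \<Longrightarrow> \<exists>m. F m x > 0"
  shows "\<exists>r>0. \<exists>N. \<forall>n\<ge>N. \<forall>x\<in>C. F n x \<ge> r"
proof (rule ccontr)
  assume "\<not> ?thesis"
  hence "\<forall>k::nat. \<exists>n\<ge>k. \<exists>x\<in>C. F n x < 1 / (real k + 1)"
    by (metis divide_pos_pos linorder_not_le of_nat_0_le_iff zero_less_one add_nonneg_pos)
  then obtain nn xx where nn: "\<And>k. nn k \<ge> k" and xx: "\<And>k. xx k \<in> C"
     and lt: "\<And>k. F (nn k) (xx k) < 1 / (real k + 1)"
    by metis
  from C xx obtain l \<sigma> where l: "l \<in> C" and \<sigma>: "strict_mono \<sigma>" and lim: "(xx \<circ> \<sigma>) \<longlonglongrightarrow> l"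
    unfolding compact_def by metis
  obtain m where m: "F m l > 0" using pos[OF l] by blast
  have "((\<lambda>k. F m (xx (\<sigma> k))) \<longlongrightarrow> F m l) sequentially"
    using continuous_on_tendsto_compose[OF cont[of m] lim[unfolded comp_def] l] xx by auto
  hence ev_near: "eventually (\<lambda>k. F m (xx (\<sigma> k)) > F m l / 2) sequentially"
    using m by (intro order_tendstoD(1)) auto
  have "((\<lambda>k. 1 / (real (\<sigma> k) + 1)) \<longlongrightarrow> 0) sequentially"
    using LIMSEQ_subseq_LIMSEQ[OF LIMSEQ_inverse_real_of_nat \<sigma>]
    by (simp add: comp_def inverse_eq_divide add.commute)
  hence ev_small: "eventually (\<lambda>k. 1 / (real (\<sigma> k) + 1) < F m l / 2) sequentially"
    using m by (intro order_tendstoD(2)) auto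
  have ev_late: "eventually (\<lambda>k. m \<le> \<sigma> k) sequentially"
    unfolding eventually_sequentially using seq_suble[OF \<sigma>] order_trans by blast
  from eventually_happens'[OF _ eventually_conj[OF ev_near eventually_conj[OF ev_small ev_late]]]
  obtain k where k: "F m (xx (\<sigma> k)) > F m l / 2" "1 / (real (\<sigma> k) + 1) < F m l / 2" "m \<le> \<sigma> k"
    by auto
  have "F m (xx (\<sigma> k)) \<le> F (nn (\<sigma> k)) (xx (\<sigma> k))"
    using mono[OF xx, of m "nn (\<sigma> k)"] nn[of "\<sigma> k"] k(3) by auto
  with lt[of "\<sigma> k"] k show False by linarith
qed

lemma coercive_on_sphere_imp_in_image:
  fixes E :: "'a::euclidean_space \<Rightarrow> 'a"
  assumes S: "subspace S" and ES: "\<And>T. T \<in> S \<Longrightarrow> E T \<in> S" and cont: "continuous_on S E"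
    and z: "z \<in> S" and R: "R > 0"
    and coercive: "\<And>T. T \<in> S \<Longrightarrow> norm T = R \<Longrightarrow> inner (E T - z) T > 0"
  shows "z \<in> E ` S"
proof (rule ccontr)
  assume "z \<notin> E ` S"
  hence ne: "\<And>T. T \<in> S \<Longrightarrow> E T - z \<noteq> 0" by force
  define B where "B = S \<inter> cball 0 R"
  \<comment> \<open>A fixed point of \<open>f\<close> on the sphere would make \<open>(E T - z)\<cdot>T\<close> negative.\<close>
  define f where "f T = - (R / norm (E T - z)) *\<^sub>R (E T - z)" for T
  have norm_f: "norm (f T) = R" if "T \<in> S" for T
    unfolding f_def using ne[OF that] R by simp
  have "compact B" unfolding B_def
    using closed_subspace[OF S] by (simp add: closed_Int_compact)
  moreover have "convex B" unfolding B_def using subspace_imp_convex[OF S] by (simp add: convex_Int)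
  moreover have "B \<noteq> {}" unfolding B_def using subspace_0[OF S] R by auto
  moreover have "continuous_on B f" unfolding f_def B_def
    by (intro continuous_intros continuous_on_subset[OF cont]) (use ne in auto)
  moreover have "f \<in> B \<rightarrow> B"
  proof
    fix T assume "T \<in> B"
    hence TS: "T \<in> S" by (simp add: B_def)
    have "f T \<in> S" unfolding f_def using ES[OF TS] z S
      by (intro subspace_neg subspace_scale subspace_diff) auto
    with norm_f[OF TS] show "f T \<in> B" by (simp add: B_def)
  qed
  ultimately obtain T where T: "T \<in> B" "f T = T" by (rule brouwer)
  hence TS: "T \<in> S" by (simp add: B_def)
  have norm_T: "norm T = R" using norm_f[OF TS] T(2) by simp
  have "inner (E T - z) T = inner (E T - z) (f T)" using T(2) by simp
  also have "\<dots> = - (R / norm (E T - z)) * (norm (E T - z))\<^sup>2"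
    unfolding f_def by (simp add: power2_norm_eq_inner)
  also have "\<dots> = - R * norm (E T - z)" using ne[OF TS] by (simp add: power2_eq_square)
  also have "\<dots> < 0" using ne[OF TS] R by simp
  finally show False using coercive[OF TS norm_T] by simp
qed

lemma monotone_if_derivative_nonneg:
  fixes E :: "'a::euclidean_space \<Rightarrow> 'a" and E' :: "'a \<Rightarrow> 'a \<Rightarrow>\<^sub>L 'a"
  assumes S: "subspace S"
    and der: "\<forall>T\<in>S. (E has_derivative blinfun_apply (E' T)) (at T within S)"
    and nonneg: "\<forall>T\<in>S. \<forall>B\<in>S. inner (blinfun_apply (E' T) B) B \<ge> 0"
    and A: "A \<in> S" and B: "B \<in> S"
  shows "inner (E A - E B) (A - B) \<ge> 0"
proof -
  define p where "p t = B + t *\<^sub>R (A - B)" for t :: real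
  have pS: "p t \<in> S" for t unfolding p_def using S A B
    by (intro subspace_add subspace_scale subspace_diff) auto
  have ABS: "A - B \<in> S" using S A B by (simp add: subspace_diff)
  have dp: "(p has_derivative (\<lambda>s. s *\<^sub>R (A - B))) (at t)" for t
    unfolding p_def by (auto intro!: derivative_eq_intros)
  have dEp: "((\<lambda>t. E (p t)) has_derivative (\<lambda>s. blinfun_apply (E' (p t)) (s *\<^sub>R (A - B)))) (at t)" for t
    using has_derivative_in_compose2[of S E "\<lambda>x. blinfun_apply (E' x)" p UNIV t, OF _ _ _ dp] der pS
    by auto
  have dg: "((\<lambda>t. inner (E (p t)) (A - B)) has_real_derivative
          inner (blinfun_apply (E' (p t)) (A - B)) (A - B)) (at t)" for t
    by (rule has_derivative_imp_has_field_derivative[OF has_derivative_inner_left[OF dEp]])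
      (simp add: blinfun.scaleR_right)
  have "inner (E (p 0)) (A - B) \<le> inner (E (p 1)) (A - B)"
    by (rule DERIV_nonneg_imp_nondecreasing[of 0 1]) (use dg nonneg pS ABS in auto)
  thus ?thesis unfolding p_def by (simp add: inner_diff_left)
qed

locale bounded_monotone_map =
  fixes S :: "'a::euclidean_space set" and E :: "'a \<Rightarrow> 'a" and C :: real
  assumes subspace: "subspace S" and maps_into: "\<And>T. T \<in> S \<Longrightarrow> E T \<in> S"
    and continuous: "continuous_on S E"
    and monotone: "\<And>A B. A \<in> S \<Longrightarrow> B \<in> S \<Longrightarrow> inner (E A - E B) (A - B) \<ge> 0"
    and bounded: "\<And>T. T \<in> S \<Longrightarrow> norm (E T) \<le> C"
begin

lemma scaleR_mem: "T \<in> S \<Longrightarrow> a *\<^sub>R T \<in> S"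
  using subspace by (simp add: subspace_scale)

lemma bound_nonneg: "0 \<le> C"
  using bounded[OF subspace_0[OF subspace]] norm_ge_zero order_trans by blast

lemma compact_unit_sphere: "compact {T\<in>S. norm T = 1}"
proof -
  have "{T\<in>S. norm T = 1} = S \<inter> sphere 0 1" by auto
  thus ?thesis using closed_subspace[OF subspace] by (simp add: closed_Int_compact)
qed

lemma inner_scaled_mono:
  assumes T: "T \<in> S" and mn: "m \<le> n"
  shows "inner (E (real m *\<^sub>R T)) T \<le> inner (E (real n *\<^sub>R T)) T"
proof -
  have "0 \<le> inner (E (real n *\<^sub>R T) - E (real m *\<^sub>R T)) (real n *\<^sub>R T - real m *\<^sub>R T)"
    by (rule monotone) (auto intro: scaleR_mem T)
  also have "\<dots> = (real n - real m) * inner (E (real n *\<^sub>R T) - E (real m *\<^sub>R T)) T"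
    by (simp add: scaleR_diff_left[symmetric] del: scaleR_diff_left)
  finally have "m < n \<Longrightarrow> 0 \<le> inner (E (real n *\<^sub>R T) - E (real m *\<^sub>R T)) T"
    by (simp add: zero_le_mult_iff)
  thus ?thesis using mn by (cases "m = n") (auto simp: inner_diff_left)
qed

definition margin :: "nat \<Rightarrow> 'a \<Rightarrow> ereal" where
  "margin n y = (INF T\<in>{T\<in>S. norm T = 1}. ereal (inner (E (real n *\<^sub>R T) - y) T))"

lemma ereal_le_margin_iff:
  "ereal r \<le> margin n y \<longleftrightarrow> (\<forall>T\<in>S. norm T = 1 \<longrightarrow> r \<le> inner (E (real n *\<^sub>R T) - y) T)"
  unfolding margin_def le_INF_iff by auto

definition asymptotic_slope :: "'a \<Rightarrow> real" where
  "asymptotic_slope T = (SUP n::nat. inner (E (real n *\<^sub>R T)) T)"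

lemma inner_scaled_le_bound:
  assumes "T \<in> S" "norm T = 1"
  shows "inner (E (real n *\<^sub>R T)) T \<le> C"
proof -
  have "inner (E (real n *\<^sub>R T)) T \<le> norm (E (real n *\<^sub>R T)) * norm T" by (rule norm_cauchy_schwarz)
  also have "\<dots> \<le> C" using bounded[OF scaleR_mem[OF assms(1)]] assms(2) by simp
  finally show ?thesis .
qed

lemma bdd_above_inner_scaled:
  "T \<in> S \<Longrightarrow> norm T = 1 \<Longrightarrow> bdd_above (range (\<lambda>n::nat. inner (E (real n *\<^sub>R T)) T))"
  using inner_scaled_le_bound by (intro bdd_aboveI2)

lemma inner_scaled_le_asymptotic_slope:
  "T \<in> S \<Longrightarrow> norm T = 1 \<Longrightarrow> inner (E (real n *\<^sub>R T)) T \<le> asymptotic_slope T"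
  unfolding asymptotic_slope_def by (rule cSUP_upper[OF _ bdd_above_inner_scaled]) auto

lemma asymptotic_slope_le_bound:
  "T \<in> S \<Longrightarrow> norm T = 1 \<Longrightarrow> asymptotic_slope T \<le> C"
  unfolding asymptotic_slope_def by (rule cSUP_least) (auto intro: inner_scaled_le_bound)

lemma less_asymptotic_slope_iff:
  assumes "T \<in> S" "norm T = 1"
  shows "inner T y < asymptotic_slope T \<longleftrightarrow> (\<exists>m. inner (E (real m *\<^sub>R T) - y) T > 0)"
proof -
  have "inner T y < asymptotic_slope T \<longleftrightarrow> (\<exists>m. inner T y < inner (E (real m *\<^sub>R T)) T)"
    unfolding asymptotic_slope_def using less_cSUP_iff[OF _ bdd_above_inner_scaled[OF assms]] by simp
  thus ?thesis by (simp add: inner_diff_left inner_diff_right inner_commute)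
qed

lemma eventually_uniform_margin:
  assumes K: "compact K"
    and pos: "\<And>y T. y \<in> K \<Longrightarrow> T \<in> S \<Longrightarrow> norm T = 1 \<Longrightarrow> \<exists>m. inner (E (real m *\<^sub>R T) - y) T > 0"
  shows "\<exists>r>0. \<exists>N. \<forall>n\<ge>N. \<forall>y\<in>K. ereal r \<le> margin n y"
proof -
  define F where "F m p = inner (E (real m *\<^sub>R fst p) - snd p) (fst p)" for m p
  have "compact ({T\<in>S. norm T = 1} \<times> K)" using compact_unit_sphere K by (rule compact_Times)
  moreover have "continuous_on ({T\<in>S. norm T = 1} \<times> K) (F m)" for m
    unfolding F_def by (intro continuous_intros continuous_on_compose2[OF continuous])
      (auto intro: scaleR_mem)
  moreover have "F m p \<le> F n p" if "p \<in> {T\<in>S. norm T = 1} \<times> K" "m \<le> n" for p m n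
    using inner_scaled_mono[of "fst p" m n] that unfolding F_def by (auto simp: inner_diff_left)
  moreover have "\<exists>m. F m p > 0" if "p \<in> {T\<in>S. norm T = 1} \<times> K" for p
    using pos that unfolding F_def by auto
  ultimately obtain r N where "r > 0" "\<forall>n\<ge>N. \<forall>p\<in>{T\<in>S. norm T = 1} \<times> K. F n p \<ge> r"
    using eventually_uniformly_positive_compact[of _ F] by blast
  thus ?thesis unfolding ereal_le_margin_iff F_def by force
qed

lemma interior_imp_ex_inner_scaled_pos:
  assumes y: "y \<in> (top_of_set S) interior_of (E ` S)" and T: "T \<in> S" "norm T = 1"
  shows "\<exists>m. inner (E (real m *\<^sub>R T) - y) T > 0"
proof -
  have yS: "y \<in> S" using y interior_of_subset_topspace by fastforce
  from y obtain V where V: "openin (top_of_set S) V" "y \<in> V" "V \<subseteq> E ` S"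
    unfolding interior_of_def by auto
  then obtain \<rho> where \<rho>: "\<rho> > 0" "\<And>x'. x' \<in> S \<Longrightarrow> dist x' y < \<rho> \<Longrightarrow> x' \<in> V"
    unfolding openin_euclidean_subtopology_iff by meson
  define w where "w = y + (\<rho>/2) *\<^sub>R T"
  have "w \<in> S" unfolding w_def using subspace yS T by (simp add: subspace_add subspace_scale)
  moreover have "dist w y = \<rho> / 2" unfolding w_def dist_norm using T \<rho> by simp
  ultimately have "w \<in> E ` S" using \<rho> V(3) by auto
  then obtain Q where Q: "Q \<in> S" "E Q = w" by auto
  define M where "M = (C + norm w) * norm Q"
  have M0: "M \<ge> 0" unfolding M_def using bound_nonneg by simp
  obtain m :: nat where m: "4 * M / \<rho> < real m" using reals_Archimedean2 by blast
  have m_pos: "real m > 0" using m M0 \<rho> by (smt (verit) divide_nonneg_pos)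
  have mT: "real m *\<^sub>R T \<in> S" using scaleR_mem T by auto
  \<comment> \<open>Monotonicity between \<open>mT\<close> and \<open>Q\<close>, divided by \<open>m\<close>: the term involving \<open>Q\<close> is \<open>O(1/m)\<close>.\<close>
  have "0 \<le> inner (E (real m *\<^sub>R T) - E Q) (real m *\<^sub>R T - Q)"
    by (rule monotone[OF mT Q(1)])
  hence "inner (E (real m *\<^sub>R T) - E Q) Q \<le> real m * inner (E (real m *\<^sub>R T) - w) T"
    using Q by (simp add: inner_diff_right)
  moreover have "\<bar>inner (E (real m *\<^sub>R T) - E Q) Q\<bar> \<le> M"
  proof -
    have "\<bar>inner (E (real m *\<^sub>R T) - E Q) Q\<bar> \<le> norm (E (real m *\<^sub>R T) - E Q) * norm Q"
      by (rule Cauchy_Schwarz_ineq2)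
    also have "\<dots> \<le> M" unfolding M_def
      using norm_triangle_ineq4[of "E (real m *\<^sub>R T)" "E Q"] bounded[OF mT] Q
      by (intro mult_right_mono) auto
    finally show ?thesis .
  qed
  ultimately have "- M / real m \<le> inner (E (real m *\<^sub>R T) - w) T"
    using m_pos by (simp add: field_simps)
  moreover have "M / real m < \<rho> / 4"
    using m m_pos \<rho> by (simp add: field_simps)
  moreover have "inner (E (real m *\<^sub>R T) - y) T = inner (E (real m *\<^sub>R T) - w) T + \<rho> / 2"
    unfolding w_def using T
    by (simp add: inner_diff_left inner_add_left algebra_simps power2_norm_eq_inner[symmetric])
  ultimately show ?thesis using \<rho> by (intro exI[of _ m]) linarith
qed

definition coercivity_set :: "real \<Rightarrow> 'a set" where
  "coercivity_set c = S \<inter> cball 0 C \<inter>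
     (\<Inter>T\<in>{T\<in>S. norm T = 1}. {y. inner T y \<le> asymptotic_slope T - c})"

lemma mem_coercivity_set:
  assumes y: "y \<in> S" and c: "c > 0" and margin: "ereal c \<le> margin N y"
  shows "y \<in> coercivity_set c"
proof -
  have below: "inner T y \<le> asymptotic_slope T - c" if T: "T \<in> S" "norm T = 1" for T
  proof -
    have "c \<le> inner (E (real N *\<^sub>R T)) T - inner y T"
      using margin T unfolding ereal_le_margin_iff by (simp only: inner_diff_left)
    thus ?thesis using inner_scaled_le_asymptotic_slope[OF T, of N] inner_commute[of T y] by linarith
  qed
  have "norm y \<le> C"
  proof (cases "y = 0")
    case True thus ?thesis using bound_nonneg by simp
  next
    case False
    define T where "T = (1 / norm y) *\<^sub>R y"
    have T: "T \<in> S" "norm T = 1" unfolding T_def using False y scaleR_mem by auto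
    have "norm y = inner T y"
      unfolding T_def using False by (simp add: power2_norm_eq_inner[symmetric] power2_eq_square)
    also have "\<dots> \<le> C" using below[OF T] asymptotic_slope_le_bound[OF T] c by simp
    finally show ?thesis .
  qed
  thus ?thesis unfolding coercivity_set_def using y below by auto
qed

lemma compact_coercivity_set: "compact (coercivity_set c)"
proof -
  have "closed (coercivity_set c)" unfolding coercivity_set_def
    by (intro closed_Int closed_subspace[OF subspace] closed_cball closed_INT ballI closed_halfspace_le)
  moreover have "bounded (coercivity_set c)" unfolding coercivity_set_def
    by (meson Int_lower1 Int_lower2 bounded_cball bounded_subset le_infE)
  ultimately show ?thesis by (simp add: compact_eq_bounded_closed)
qed

lemma coercivity_set_subset_interior:
  assumes c: "c > 0"
  shows "coercivity_set c \<subseteq> (top_of_set S) interior_of (E ` S)"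
proof
  fix y assume y: "y \<in> coercivity_set c"
  hence yS: "y \<in> S" unfolding coercivity_set_def by auto
  have "S \<inter> ball y (c/2) \<subseteq> E ` S"
  proof
    fix z assume "z \<in> S \<inter> ball y (c/2)"
    hence zS: "z \<in> S" and dz: "norm (z - y) < c/2" by (auto simp: dist_norm norm_minus_commute)
    have "inner T z < asymptotic_slope T" if T: "T \<in> S" "norm T = 1" for T
    proof -
      have "inner T z - inner T y \<le> norm (z - y)"
        using norm_cauchy_schwarz[of T "z - y"] T by (simp add: inner_diff_right)
      moreover have "inner T y \<le> asymptotic_slope T - c"
        using y T unfolding coercivity_set_def by auto
      ultimately show ?thesis using dz c by linarith
    qed
    then obtain r N where r: "r > 0" "\<forall>n\<ge>N. ereal r \<le> margin n z"
      using eventually_uniform_margin[of "{z}"] less_asymptotic_slope_iff by auto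
    show "z \<in> E ` S"
    proof (rule coercive_on_sphere_imp_in_image[OF subspace maps_into continuous zS])
      show "real (Suc N) > 0" by simp
      fix T assume T: "T \<in> S" "norm T = real (Suc N)"
      define U where "U = (1 / real (Suc N)) *\<^sub>R T"
      have U: "U \<in> S" "norm U = 1" unfolding U_def using T scaleR_mem by auto
      have TU: "T = real (Suc N) *\<^sub>R U" unfolding U_def by simp
      have "0 < inner (E (real (Suc N) *\<^sub>R U) - z) U"
        using r U unfolding ereal_le_margin_iff by (meson le_SucI less_le_trans order_refl)
      thus "0 < inner (E T - z) T" using TU by simp
    qed
  qed
  moreover have "openin (top_of_set S) (S \<inter> ball y (c/2))" by auto
  moreover have "y \<in> S \<inter> ball y (c/2)" using yS c by auto
  ultimately show "y \<in> (top_of_set S) interior_of (E ` S)"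
    unfolding interior_of_def by blast
qed

lemma compact_interior_iff_liminf_margin:
  fixes M :: "'b measure" and Y :: "'b \<Rightarrow> 'a"
  assumes YS: "\<And>x. Y x \<in> S"
  shows "(\<exists>K. compact K \<and> K \<subseteq> (top_of_set S) interior_of (E ` S) \<and> (AE x in M. Y x \<in> K))
    \<longleftrightarrow> (\<exists>c>0. ereal c \<le> liminf (\<lambda>n. essinf M (\<lambda>x. margin n (Y x))))"
proof
  assume "\<exists>K. compact K \<and> K \<subseteq> (top_of_set S) interior_of (E ` S) \<and> (AE x in M. Y x \<in> K)"
  then obtain K where K: "compact K" "K \<subseteq> (top_of_set S) interior_of (E ` S)" "AE x in M. Y x \<in> K"
    by blast
  obtain r N where r: "r > 0" "\<forall>n\<ge>N. \<forall>y\<in>K. ereal r \<le> margin n y"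
    using eventually_uniform_margin[OF K(1)] interior_imp_ex_inner_scaled_pos K(2) by blast
  have "ereal r \<le> essinf M (\<lambda>x. margin n (Y x))" if "n \<ge> N" for n
    unfolding essinf_def using K(3) r(2) that by (intro Sup_upper) (auto elim: eventually_mono)
  hence "ereal r \<le> liminf (\<lambda>n. essinf M (\<lambda>x. margin n (Y x)))"
    by (intro Liminf_bounded) (auto simp: eventually_sequentially)
  thus "\<exists>c>0. ereal c \<le> liminf (\<lambda>n. essinf M (\<lambda>x. margin n (Y x)))" using r(1) by blast
next
  assume "\<exists>c>0. ereal c \<le> liminf (\<lambda>n. essinf M (\<lambda>x. margin n (Y x)))"
  then obtain c where c: "c > 0" "ereal c \<le> liminf (\<lambda>n. essinf M (\<lambda>x. margin n (Y x)))"
    by blast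
  have "ereal (c/2) < ereal c" using c by simp
  hence "eventually (\<lambda>n. ereal (c/2) < essinf M (\<lambda>x. margin n (Y x))) sequentially"
    using c(2) by (intro less_LiminfD) (rule less_le_trans)
  then obtain N where "ereal (c/2) < essinf M (\<lambda>x. margin N (Y x))"
    unfolding eventually_sequentially by blast
  then obtain z where z: "ereal (c/2) < z" "AE x in M. z \<le> margin N (Y x)"
    unfolding essinf_def less_Sup_iff by blast
  have "AE x in M. Y x \<in> coercivity_set (c/2)"
    using z(2) by (rule eventually_mono)
      (use z(1) c(1) YS in \<open>auto intro: mem_coercivity_set[where N = N] dest: order.strict_trans2\<close>)
  thus "\<exists>K. compact K \<and> K \<subseteq> (top_of_set S) interior_of (E ` S) \<and> (AE x in M. Y x \<in> K)"
    using compact_coercivity_set coercivity_set_subset_interior c(1) by (meson half_gt_zero)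
qed

end

lemma bounded_monotone_map_if_elliptic:
  fixes E :: "'a::euclidean_space \<Rightarrow> 'a" and E' :: "'a \<Rightarrow> 'a \<Rightarrow>\<^sub>L 'a"
  assumes S: "subspace S" and "\<forall>T\<in>S. E T \<in> S"
    and der: "\<forall>T\<in>S. (E has_derivative blinfun_apply (E' T)) (at T within S)"
    and h_pos: "\<forall>t\<ge>0. h t > 0"
    and elliptic: "\<forall>T\<in>S. \<forall>B\<in>S. h (norm T) * (norm B)\<^sup>2 \<le> inner (blinfun_apply (E' T) B) B"
    and "\<forall>T\<in>S. norm (E T) \<le> C"
  shows "bounded_monotone_map S E C"
proof
  have "\<forall>T\<in>S. \<forall>B\<in>S. inner (blinfun_apply (E' T) B) B \<ge> 0"
  proof (intro ballI)
    fix T B assume "T \<in> S" "B \<in> S"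
    moreover have "0 \<le> h (norm T) * (norm B)\<^sup>2" using h_pos by (simp add: less_imp_le)
    ultimately show "inner (blinfun_apply (E' T) B) B \<ge> 0" using elliptic by (meson order_trans)
  qed
  then show "inner (E A - E B) (A - B) \<ge> 0" if "A \<in> S" "B \<in> S" for A B
    using monotone_if_derivative_nonneg[OF S der] that by blast
  show "continuous_on S E"
    using der has_derivative_continuous continuous_on_eq_continuous_within by blast
qed (use assms in auto)

lemma transpose_add: "transpose (A + B) = transpose A + transpose (B :: real^'n^'m)"
  by (simp add: transpose_def vec_eq_iff)

lemma subspace_Sym: "subspace (Sym :: (real^'d^'d) set)"
  unfolding subspace_def Sym_def
  by (auto simp: transpose_add transpose_scalar transpose_def vec_eq_iff)

lemma sym_grad_Sym: "sym_grad G x \<in> Sym"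
  unfolding sym_grad_def Sym_def by (simp add: transpose_add transpose_scalar add.commute)

theorem lemmaA2:
  shows
  "(\<forall>(D :: real^'N^'d \<Rightarrow> real^'N^'d) (D' :: real^'N^'d \<Rightarrow> ((real^'N^'d) \<Rightarrow>\<^sub>L (real^'N^'d)))
       (C0::real) C1 C2 (h::real \<Rightarrow> real) (\<Omega> :: (real^'d) set)
       (u0 :: real^'d \<Rightarrow> real^'N) (G :: real^'d \<Rightarrow> real^'N^'d).
     (\<forall>T. (D has_derivative blinfun_apply (D' T)) (at T)) \<and> continuous_on UNIV D' \<and>
     C0 \<ge> 0 \<and> C1 > 0 \<and> C2 > 0 \<and>
     (\<forall>t\<ge>0. h t > 0) \<and> (\<forall>s t. 0 \<le> s \<longrightarrow> s \<le> t \<longrightarrow> h t \<le> h s) \<and> continuous_on {0..} h \<and>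
     (\<forall>T. inner (D T) T \<ge> C1 * norm T - C0) \<and>
     (\<forall>T. norm (D T) \<le> C2) \<and>
     (\<forall>T B. h (norm T) * (norm B)\<^sup>2 \<le> inner (blinfun_apply (D' T) B) B \<and>
            inner (blinfun_apply (D' T) B) B \<le> C2 * (norm B)\<^sup>2 / (1 + norm T)) \<and>
     open \<Omega> \<and> connected \<Omega> \<and> bounded \<Omega> \<and> \<Omega> \<noteq> {} \<and>
     W1inf \<Omega> u0 \<and> weak_gradient \<Omega> u0 G
     \<longrightarrow>
     ((\<exists>K. compact K \<and> K \<subseteq> interior (range D) \<and> (AE x in lebesgue_on \<Omega>. G x \<in> K))
      \<longleftrightarrow>
      (\<exists>c>0. ereal c \<le> liminf (\<lambda>n::nat. essinf (lebesgue_on \<Omega>)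
          (\<lambda>x. INF T\<in>{T. norm T = 1}. ereal (inner (D (real n *\<^sub>R T) - G x) T))))))
   \<and>
   (\<forall>(E :: real^'d^'d \<Rightarrow> real^'d^'d) (E' :: real^'d^'d \<Rightarrow> ((real^'d^'d) \<Rightarrow>\<^sub>L (real^'d^'d)))
       (C0::real) C1 C2 (h::real \<Rightarrow> real) (\<Omega> :: (real^'d) set)
       (u0 :: real^'d \<Rightarrow> real^'d) (G :: real^'d \<Rightarrow> real^'d^'d).
     (\<forall>T\<in>Sym. E T \<in> Sym) \<and>
     (\<forall>T\<in>Sym. (E has_derivative blinfun_apply (E' T)) (at T within Sym)) \<and> continuous_on Sym E' \<and>
     C0 \<ge> 0 \<and> C1 > 0 \<and> C2 > 0 \<and>
     (\<forall>t\<ge>0. h t > 0) \<and> (\<forall>s t. 0 \<le> s \<longrightarrow> s \<le> t \<longrightarrow> h t \<le> h s) \<and> continuous_on {0..} h \<and>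
     (\<forall>T\<in>Sym. inner (E T) T \<ge> C1 * norm T - C0) \<and>
     (\<forall>T\<in>Sym. norm (E T) \<le> C2) \<and>
     (\<forall>T\<in>Sym. \<forall>B\<in>Sym. h (norm T) * (norm B)\<^sup>2 \<le> inner (blinfun_apply (E' T) B) B \<and>
            inner (blinfun_apply (E' T) B) B \<le> C2 * (norm B)\<^sup>2 / (1 + norm T)) \<and>
     open \<Omega> \<and> connected \<Omega> \<and> bounded \<Omega> \<and> \<Omega> \<noteq> {} \<and>
     W11 \<Omega> u0 \<and> weak_gradient \<Omega> u0 G
     \<longrightarrow>
     ((\<exists>K. compact K \<and> K \<subseteq> (top_of_set Sym) interior_of (E ` Sym) \<and>
           (AE x in lebesgue_on \<Omega>. sym_grad G x \<in> K))
      \<longleftrightarrow>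
      (\<exists>c>0. ereal c \<le> liminf (\<lambda>n::nat. essinf (lebesgue_on \<Omega>)
          (\<lambda>x. INF T\<in>{T\<in>Sym. norm T = 1}. ereal (inner (E (real n *\<^sub>R T) - sym_grad G x) T))))))"
proof (intro conjI allI impI, goal_cases)
  case (1 D D' C0 C1 C2 h \<Omega> u0 G)
  then have map: "bounded_monotone_map UNIV D C2"
    by (intro bounded_monotone_map_if_elliptic[where E' = D' and h = h] subspace_UNIV) auto
  show ?case
    using bounded_monotone_map.compact_interior_iff_liminf_margin[OF map, of G "lebesgue_on \<Omega>"]
    by (simp add: bounded_monotone_map.margin_def[OF map])
next
  case (2 E E' C0 C1 C2 h \<Omega> u0 G)
  then have map: "bounded_monotone_map Sym E C2"
    by (intro bounded_monotone_map_if_elliptic[where E' = E' and h = h] subspace_Sym) auto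
  show ?case
    using bounded_monotone_map.compact_interior_iff_liminf_margin[OF map sym_grad_Sym,
        where M = "lebesgue_on \<Omega>"]
    by (simp add: bounded_monotone_map.margin_def[OF map])
qed

end
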